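(* Let $A$ be a non-empty set, $I$ a non-empty index set, $\{V_i\}_{i\in I}\subseteq\mathcal R(A)$, $E$ a fuzzy equivalence on $A$, and $(A/E,I,V_i^{A/E})$ the quotient fuzzy relational system of $(A,I,V_i)$ with respect to $E$. Then the fuzzy relation $E^\natural\in\mathcal R(A,A/E)$ defined by $E^\natural(a_1,E_{a_2})=E(a_1,a_2)$ for all $a_1,a_2\in A$ is a uniform fuzzy relation whose kernel is $E$. Moreover, $E^\natural$ is a solution both to $WL^{2\text{-}1}(A,A/E,I,V_i,V_i^{A/E})$ and to $WL^{2\text{-}2}(A,A/E,I,V_i,V_i^{A/E})$.
   Context: $\mathcal L=(L,\wedge,\vee,\otimes,\to,0,1)$ is a complete residuated lattice; $x\leftrightarrow y=(x\to y)\wedge(y\to x)$. For non-empty sets $X,Y$, $\mathcal R(X,Y)$ is the set of fuzzy relations $X\times Y\to L$, $\mathcal R(X)=\mathcal R(X,X)$, ordered pointwise; $R^{-1}(y,x)=R(x,y)$; $(R\circ S)(x,t)=\bigvee_{y}R(x,y)\otimes S(y,t)$. A fuzzy equivalence $E$ on $A$ is a fuzzy relation that is reflexive ($E(a,a)=1$), symmetric and transitive ($E(a,b)\otimes E(b,c)\le E(a,c)$). For $a\in A$, $E_a$ is the fuzzy subset $x\mapsto E(a,x)$, and $A/E=\{E_a:a\in A\}$. The quotient fuzzy relational system is $(A/E,I,V_i^{A/E})$ with $V_i^{A/E}(E_{a_1},E_{a_2})=(E\circ V_i\circ E)(a_1,a_2)$ (well defined). For $R\in\mathcal R(X,Y)$: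 kernel $E_X^R(x_1,x_2)=\bigwedge_{y}R(x_1,y)\leftrightarrow R(x_2,y)$, co-kernel $E_Y^R(y_1,y_2)=\bigwedge_xR(x,y_1)\leftrightarrow R(x,y_2)$. $R$ is a uniform fuzzy relation if for every $x$ there is $y$ with $R(x,y)=1$, for every $y$ there is $x$ with $R(x,y)=1$, and $R(x,y_1)\otimes R(x,y_2)\le E_Y^R(y_1,y_2)$ for all $x,y_1,y_2$. Heterogeneous systems (given non-empty sets $P,Q$, $\{V_i\}\subseteq\mathcal R(P)$, $\{W_i\}\subseteq\mathcal R(Q)$, unknown $U\in\mathcal R(P,Q)$, with the bound $U\le Z$ trivial since $Z$ is omitted, i.e. constant $1$): $WL^{2\text{-}1}(P,Q,I,V_i,W_i)$: $U^{-1}\circ V_i\le W_i\circ U^{-1}$ for all $i\in I$; $WL^{2\text{-}2}(P,Q,I,V_i,W_i)$: $V_i\circ U\le U\circ W_i$ for all $i\in I$. *)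

theory Defs
  imports Main
begin

text \<open>Complete residuated lattice: the carrier is a type of class complete_lattice
  (with 0 = bot, 1 = top); the multiplication is tensor, the residuum is impl.\<close>
definition complete_residuated_lattice ::
  "('l::complete_lattice \<Rightarrow> 'l \<Rightarrow> 'l) \<Rightarrow> ('l \<Rightarrow> 'l \<Rightarrow> 'l) \<Rightarrow> bool" where
  "complete_residuated_lattice tensor impl \<longleftrightarrow>
     (\<forall>x y z. tensor (tensor x y) z = tensor x (tensor y z)) \<and>
     (\<forall>x y. tensor x y = tensor y x) \<and>
     (\<forall>x. tensor x top = x) \<and>
     (\<forall>x y z. tensor x y \<le> z \<longleftrightarrow> x \<le> impl y z)"

definition biimpl :: "('l::complete_lattice \<Rightarrow> 'l \<Rightarrow> 'l) \<Rightarrow> 'l \<Rightarrow> 'l \<Rightarrow> 'l" where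
  "biimpl impl x y = inf (impl x y) (impl y x)"

definition frel_comp ::
  "('l::complete_lattice \<Rightarrow> 'l \<Rightarrow> 'l) \<Rightarrow> 'b set \<Rightarrow> ('a \<Rightarrow> 'b \<Rightarrow> 'l) \<Rightarrow> ('b \<Rightarrow> 'c \<Rightarrow> 'l) \<Rightarrow> 'a \<Rightarrow> 'c \<Rightarrow> 'l" where
  "frel_comp tensor Y R S x t = (SUP y\<in>Y. tensor (R x y) (S y t))"

definition frel_conv :: "('a \<Rightarrow> 'b \<Rightarrow> 'l) \<Rightarrow> 'b \<Rightarrow> 'a \<Rightarrow> 'l" where
  "frel_conv R y x = R x y"

text \<open>Fuzzy equivalence on the whole type 'a (the set A is the type 'a).\<close>
definition fuzzy_equivalence :: "('l::complete_lattice \<Rightarrow> 'l \<Rightarrow> 'l) \<Rightarrow> ('a \<Rightarrow> 'a \<Rightarrow> 'l) \<Rightarrow> bool" where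
  "fuzzy_equivalence tensor E \<longleftrightarrow>
     (\<forall>a. E a a = top) \<and> (\<forall>a b. E a b = E b a) \<and>
     (\<forall>a b c. tensor (E a b) (E b c) \<le> E a c)"

definition frel_kernel ::
  "('l::complete_lattice \<Rightarrow> 'l \<Rightarrow> 'l) \<Rightarrow> 'b set \<Rightarrow> ('a \<Rightarrow> 'b \<Rightarrow> 'l) \<Rightarrow> 'a \<Rightarrow> 'a \<Rightarrow> 'l" where
  "frel_kernel impl Y R x1 x2 = (INF y\<in>Y. biimpl impl (R x1 y) (R x2 y))"

definition frel_cokernel ::
  "('l::complete_lattice \<Rightarrow> 'l \<Rightarrow> 'l) \<Rightarrow> 'a set \<Rightarrow> ('a \<Rightarrow> 'b \<Rightarrow> 'l) \<Rightarrow> 'b \<Rightarrow> 'b \<Rightarrow> 'l" where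
  "frel_cokernel impl X R y1 y2 = (INF x\<in>X. biimpl impl (R x y1) (R x y2))"

definition uniform_frel ::
  "('l::complete_lattice \<Rightarrow> 'l \<Rightarrow> 'l) \<Rightarrow> ('l \<Rightarrow> 'l \<Rightarrow> 'l) \<Rightarrow> 'a set \<Rightarrow> 'b set \<Rightarrow> ('a \<Rightarrow> 'b \<Rightarrow> 'l) \<Rightarrow> bool" where
  "uniform_frel tensor impl X Y R \<longleftrightarrow>
     (\<forall>x\<in>X. \<exists>y\<in>Y. R x y = top) \<and>
     (\<forall>y\<in>Y. \<exists>x\<in>X. R x y = top) \<and>
     (\<forall>x\<in>X. \<forall>y1\<in>Y. \<forall>y2\<in>Y. tensor (R x y1) (R x y2) \<le> frel_cokernel impl X R y1 y2)"

definition quot_set :: "('a \<Rightarrow> 'a \<Rightarrow> 'l) \<Rightarrow> ('a \<Rightarrow> 'l) set" where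
  "quot_set E = range E"

text \<open>Quotient relation V^{A/E}(E_{a1},E_{a2}) = (E o V o E)(a1,a2) (representatives chosen).\<close>
definition quot_rel ::
  "('l::complete_lattice \<Rightarrow> 'l \<Rightarrow> 'l) \<Rightarrow> ('a \<Rightarrow> 'a \<Rightarrow> 'l) \<Rightarrow> ('a \<Rightarrow> 'a \<Rightarrow> 'l) \<Rightarrow> ('a \<Rightarrow> 'l) \<Rightarrow> ('a \<Rightarrow> 'l) \<Rightarrow> 'l" where
  "quot_rel tensor E V C D =
     frel_comp tensor UNIV (frel_comp tensor UNIV E V) E (SOME a. C = E a) (SOME a. D = E a)"

definition nat_frel :: "('a \<Rightarrow> 'a \<Rightarrow> 'l) \<Rightarrow> 'a \<Rightarrow> ('a \<Rightarrow> 'l) \<Rightarrow> 'l" where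
  "nat_frel E a C = E a (SOME b. C = E b)"

text \<open>Heterogeneous weakly linear systems (no upper bound Z), unknown U in R(P,Q).\<close>
definition WL21 ::
  "('l::complete_lattice \<Rightarrow> 'l \<Rightarrow> 'l) \<Rightarrow> 'p set \<Rightarrow> 'q set \<Rightarrow> ('i \<Rightarrow> 'p \<Rightarrow> 'p \<Rightarrow> 'l) \<Rightarrow>
   ('i \<Rightarrow> 'q \<Rightarrow> 'q \<Rightarrow> 'l) \<Rightarrow> ('p \<Rightarrow> 'q \<Rightarrow> 'l) \<Rightarrow> bool" where
  "WL21 tensor P Q V W U \<longleftrightarrow>
     (\<forall>i. \<forall>q\<in>Q. \<forall>p\<in>P.
        frel_comp tensor P (frel_conv U) (V i) q p \<le> frel_comp tensor Q (W i) (frel_conv U) q p)"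

definition WL22 ::
  "('l::complete_lattice \<Rightarrow> 'l \<Rightarrow> 'l) \<Rightarrow> 'p set \<Rightarrow> 'q set \<Rightarrow> ('i \<Rightarrow> 'p \<Rightarrow> 'p \<Rightarrow> 'l) \<Rightarrow>
   ('i \<Rightarrow> 'q \<Rightarrow> 'q \<Rightarrow> 'l) \<Rightarrow> ('p \<Rightarrow> 'q \<Rightarrow> 'l) \<Rightarrow> bool" where
  "WL22 tensor P Q V W U \<longleftrightarrow>
     (\<forall>i. \<forall>p\<in>P. \<forall>q\<in>Q.
        frel_comp tensor P (V i) U p q \<le> frel_comp tensor Q U (W i) p q)"

end

theory Submission
  imports Defs
begin

text \<open>Writing \<open>E\<^sup>\<natural>\<close> for the natural relation, both \<open>E\<^sup>\<natural>\<inverse> \<circ> V\<close> and \<open>V \<circ> E\<^sup>\<natural>\<close> evaluated on a class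
  \<open>E\<^sub>c\<close> reduce to the compositions \<open>E \<circ> V\<close> and \<open>V \<circ> E\<close>; reflexivity of \<open>E\<close> bounds both by
  \<open>E \<circ> V \<circ> E\<close>, which is the quotient relation evaluated at the class of the point itself, where
  \<open>E\<^sup>\<natural>\<close> takes the value \<open>1\<close>. Uniformity and the kernel come from transitivity of \<open>E\<close> in
  residuated form, \<open>E(b\<^sub>1,b\<^sub>2) \<le> E(x,b\<^sub>1) \<leftrightarrow> E(x,b\<^sub>2)\<close>, with equality at \<open>x = b\<^sub>2\<close>.\<close>

locale residuated_tensor =
  fixes tensor :: "'l::complete_lattice \<Rightarrow> 'l \<Rightarrow> 'l" (infixl \<open>\<otimes>\<close> 70)
    and impl :: "'l \<Rightarrow> 'l \<Rightarrow> 'l"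
  assumes residuated_lattice: "complete_residuated_lattice tensor impl"
begin

lemma tensor_commute: "x \<otimes> y = y \<otimes> x"
  using residuated_lattice unfolding complete_residuated_lattice_def by blast

lemma tensor_top_right [simp]: "x \<otimes> top = x"
  using residuated_lattice unfolding complete_residuated_lattice_def by blast

lemma tensor_top_left [simp]: "top \<otimes> x = x"
  using tensor_commute tensor_top_right by metis

lemma residuation: "x \<otimes> y \<le> z \<longleftrightarrow> x \<le> impl y z"
  using residuated_lattice unfolding complete_residuated_lattice_def by blast

lemma impl_top_le: "impl top x \<le> x"
  using residuation[of "impl top x" top x] by simp

lemma tensor_mono_left: "x \<le> y \<Longrightarrow> x \<otimes> z \<le> y \<otimes> z"
  using residuation order_trans by blast

lemma frel_comp_mono_left:
  assumes "\<And>x y. R x y \<le> R' x y"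
  shows "frel_comp tensor Y R S x t \<le> frel_comp tensor Y R' S x t"
  unfolding frel_comp_def by (rule SUP_mono) (use assms tensor_mono_left in blast)

end

locale fuzzy_quotient = residuated_tensor +
  fixes E :: "'a \<Rightarrow> 'a \<Rightarrow> 'l::complete_lattice"
  assumes fuzzy_equivalence: "fuzzy_equivalence tensor E"
begin

lemma E_refl [simp]: "E a a = top"
  and E_sym: "E a b = E b a"
  and E_trans: "E a b \<otimes> E b c \<le> E a c"
  using fuzzy_equivalence unfolding fuzzy_equivalence_def by blast+

lemma class_some_rep: "E (SOME b'. E b = E b') = E b"
  by (rule someI[of "\<lambda>b'. E b = E b'" b, symmetric]) simp

lemma nat_frel_class: "nat_frel E a (E b) = E a b"
  unfolding nat_frel_def using class_some_rep E_sym by metis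

lemma quot_rel_class:
  "quot_rel tensor E V (E b) (E c) = frel_comp tensor UNIV (frel_comp tensor UNIV E V) E b c"
proof -
  have "E z (SOME c'. E c = E c') = E z c" for z
    using class_some_rep E_sym by metis
  then show ?thesis
    unfolding quot_rel_def frel_comp_def class_some_rep by simp
qed

lemma E_le_impl: "E b1 b2 \<le> impl (E x b1) (E x b2)"
proof -
  have "E b1 b2 \<otimes> E x b1 \<le> E x b2"
    using E_trans[of x b1 b2] tensor_commute[of "E x b1"] by simp
  then show ?thesis
    by (simp add: residuation)
qed

lemma E_le_biimpl: "E b1 b2 \<le> biimpl impl (E x b1) (E x b2)"
  unfolding biimpl_def using E_le_impl[of b1 b2 x] E_le_impl[of b2 b1 x] E_sym[of b1 b2] by simp

lemma le_frel_comp_E_left: "R x y \<le> frel_comp tensor UNIV E R x y"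
  unfolding frel_comp_def using SUP_upper[of x UNIV "\<lambda>z. E x z \<otimes> R z y"] by simp

lemma le_frel_comp_E_right: "R x y \<le> frel_comp tensor UNIV R E x y"
  unfolding frel_comp_def using SUP_upper[of y UNIV "\<lambda>z. R x z \<otimes> E z y"] by simp

lemma uniform_nat_frel: "uniform_frel tensor impl UNIV (quot_set E) (nat_frel E)"
  unfolding uniform_frel_def quot_set_def
proof (intro conjI ballI)
  fix x
  show "\<exists>y\<in>range E. nat_frel E x y = top"
    by (rule bexI[of _ "E x"]) (simp_all add: nat_frel_class)
next
  fix y assume "y \<in> range E"
  then obtain b where "y = E b" by blast
  then show "\<exists>x\<in>UNIV. nat_frel E x y = top"
    by (intro bexI[of _ b]) (simp_all add: nat_frel_class)
next
  fix x y1 y2 assume "y1 \<in> range E" "y2 \<in> range E"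
  then obtain b1 b2 where y: "y1 = E b1" "y2 = E b2" by blast
  have "E x b1 \<otimes> E x b2 \<le> E b1 b2"
    using E_sym[of x b1] E_trans[of b1 x b2] by simp
  also have "\<dots> \<le> frel_cokernel impl UNIV (nat_frel E) y1 y2"
    unfolding frel_cokernel_def y nat_frel_class by (rule INF_greatest) (rule E_le_biimpl)
  finally show "nat_frel E x y1 \<otimes> nat_frel E x y2 \<le> frel_cokernel impl UNIV (nat_frel E) y1 y2"
    unfolding y nat_frel_class .
qed

lemma kernel_nat_frel: "frel_kernel impl (quot_set E) (nat_frel E) a1 a2 = E a1 a2"
proof -
  have "frel_kernel impl (quot_set E) (nat_frel E) a1 a2 = (INF b. biimpl impl (E a1 b) (E a2 b))"
    unfolding frel_kernel_def quot_set_def by (simp add: image_image nat_frel_class)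
  also have "\<dots> = E a1 a2"
  proof (rule antisym)
    have "(INF b. biimpl impl (E a1 b) (E a2 b)) \<le> biimpl impl (E a1 a2) (E a2 a2)"
      by (rule INF_lower) simp
    also have "\<dots> \<le> E a1 a2"
      unfolding biimpl_def E_refl by (rule order_trans[OF inf_le2 impl_top_le])
    finally show "(INF b. biimpl impl (E a1 b) (E a2 b)) \<le> E a1 a2" .
    show "E a1 a2 \<le> (INF b. biimpl impl (E a1 b) (E a2 b))"
      using E_le_biimpl[of a1 a2] by (intro INF_greatest) (simp add: E_sym)
  qed
  finally show ?thesis .
qed

lemma WL21_nat_frel: "WL21 tensor UNIV (quot_set E) V (\<lambda>i. quot_rel tensor E (V i)) (nat_frel E)"
  unfolding WL21_def quot_set_def
proof (intro allI ballI)
  fix i q p assume "q \<in> range E"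
  then obtain b where q: "q = E b" by blast
  have "frel_comp tensor UNIV (frel_conv (nat_frel E)) (V i) (E b) p
      = frel_comp tensor UNIV E (V i) b p"
    unfolding frel_comp_def frel_conv_def nat_frel_class by (simp add: E_sym)
  also have "\<dots> \<le> frel_comp tensor UNIV (frel_comp tensor UNIV E (V i)) E b p"
    by (rule le_frel_comp_E_right)
  also have "\<dots> = quot_rel tensor E (V i) (E b) (E p) \<otimes> frel_conv (nat_frel E) (E p) p"
    unfolding frel_conv_def nat_frel_class quot_rel_class by simp
  also have "\<dots> \<le> frel_comp tensor (range E) (quot_rel tensor E (V i)) (frel_conv (nat_frel E)) (E b) p"
    unfolding frel_comp_def by (rule SUP_upper) simp
  finally show "frel_comp tensor UNIV (frel_conv (nat_frel E)) (V i) q p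
      \<le> frel_comp tensor (range E) (quot_rel tensor E (V i)) (frel_conv (nat_frel E)) q p"
    unfolding q .
qed

lemma WL22_nat_frel: "WL22 tensor UNIV (quot_set E) V (\<lambda>i. quot_rel tensor E (V i)) (nat_frel E)"
  unfolding WL22_def quot_set_def
proof (intro allI ballI)
  fix i p q assume "q \<in> range E"
  then obtain c where q: "q = E c" by blast
  have "frel_comp tensor UNIV (V i) (nat_frel E) p (E c) = frel_comp tensor UNIV (V i) E p c"
    unfolding frel_comp_def nat_frel_class ..
  also have "\<dots> \<le> frel_comp tensor UNIV (frel_comp tensor UNIV E (V i)) E p c"
    by (rule frel_comp_mono_left) (rule le_frel_comp_E_left)
  also have "\<dots> = nat_frel E p (E p) \<otimes> quot_rel tensor E (V i) (E p) (E c)"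
    unfolding nat_frel_class quot_rel_class by simp
  also have "\<dots> \<le> frel_comp tensor (range E) (nat_frel E) (quot_rel tensor E (V i)) p (E c)"
    unfolding frel_comp_def[of _ "range E"] by (rule SUP_upper) simp
  finally show "frel_comp tensor UNIV (V i) (nat_frel E) p q
      \<le> frel_comp tensor (range E) (nat_frel E) (quot_rel tensor E (V i)) p q"
    unfolding q .
qed

end

theorem theorem6p1:
  fixes tensor impl :: "'l::complete_lattice \<Rightarrow> 'l \<Rightarrow> 'l"
    and E :: "'a \<Rightarrow> 'a \<Rightarrow> 'l"
    and V :: "'i \<Rightarrow> 'a \<Rightarrow> 'a \<Rightarrow> 'l"
  assumes "complete_residuated_lattice tensor impl"
    and "fuzzy_equivalence tensor E"
  shows "uniform_frel tensor impl UNIV (quot_set E) (nat_frel E)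
    \<and> (\<forall>a1 a2. frel_kernel impl (quot_set E) (nat_frel E) a1 a2 = E a1 a2)
    \<and> WL21 tensor UNIV (quot_set E) V (\<lambda>i. quot_rel tensor E (V i)) (nat_frel E)
    \<and> WL22 tensor UNIV (quot_set E) V (\<lambda>i. quot_rel tensor E (V i)) (nat_frel E)"
proof -
  interpret fuzzy_quotient tensor impl E
    using assms by unfold_locales
  show ?thesis
    using uniform_nat_frel kernel_nat_frel WL21_nat_frel WL22_nat_frel by blast
qed

end
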